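(* Fix $N\ge 3$ and $\lambda>0$, and regard the quantity $F(1)$ defined by the recursion in the context as a function of $p\in[0,1)$. Then, as $p\downarrow 0$, $$F(1)=F_0(1)-\lambda^{-1}H_{N-1}\,p+o(p),$$ where $F_0(1)=\sum_{i=1}^{N-1}\frac{1}{\lambda i(N-i)}=\frac{2}{\lambda N}H_{N-1}$ and $H_n=\sum_{k=1}^n1/k$.
   Context: For $N\ge3$, $\lambda>0$, $p\in[0,1)$, define $F^{(a)}(i)$ for $2\le i\le N-1$, $1\le a\le i-1$ by $F^{(a)}(N-1)=\frac{(1-p)^a}{\lambda(N-1)}$ and, for $2\le i\le N-2$, $F^{(a)}(i)=(1-p)^{a(N-i)}\big(\frac{1}{\lambda i(N-i)}+F^{(1)}(i+1)\big)+\sum_{c=1}^{N-i-1}\binom{N-i}{c}[1-(1-p)^a]^c(1-p)^{a(N-i-c)}F^{(c)}(i+c)$, and set $F(1)=(1-p)^{N-1}\big(\frac{1}{\lambda(N-1)}+F^{(1)}(2)\big)+\sum_{c=1}^{N-2}\binom{N-1}{c}p^c(1-p)^{N-1-c}F^{(c)}(1+c)$. (By the paper's Theorem 1, $F(1)$ is the expected flooding time in an $N$-node network whose edges alternate between ON periods of mean $\mu^{-1}$ and exponential OFF periods of mean $\lambda^{-1}$, with stationary ON probability $p=\lambda/(\lambda+\mu)$ and instantaneous message transmission over ON edges; $F_0(1)$ is its value at $p=0$.) *)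

theory Defs
  imports "HOL-Analysis.Analysis" "HOL-Library.Landau_Symbols"
begin

text \<open>Fa N lam p a i is F^{(a)}(i). The branch i >= N-1 is the base case
  F^{(a)}(N-1) = (1-p)^a / (lam (N-1)); only i = N-1 is used there.\<close>
function Fa :: "nat \<Rightarrow> real \<Rightarrow> real \<Rightarrow> nat \<Rightarrow> nat \<Rightarrow> real" where
  "Fa N lam p a i =
    (if N - 1 \<le> i then (1 - p) ^ a / (lam * real (N - 1))
     else (1 - p) ^ (a * (N - i)) * (1 / (lam * real i * real (N - i)) + Fa N lam p 1 (i + 1))
        + (\<Sum>c = 1..N - i - 1. real ((N - i) choose c) * (1 - (1 - p) ^ a) ^ c
             * (1 - p) ^ (a * (N - i - c)) * Fa N lam p c (i + c)))"
  by pat_completeness auto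
termination
  by (relation "Wellfounded.measure (\<lambda>(N, lam, p, a, i). N - i)") auto

definition F1 :: "nat \<Rightarrow> real \<Rightarrow> real \<Rightarrow> real" where
  "F1 N lam p =
     (1 - p) ^ (N - 1) * (1 / (lam * real (N - 1)) + Fa N lam p 1 2)
     + (\<Sum>c = 1..N - 2. real ((N - 1) choose c) * p ^ c * (1 - p) ^ (N - 1 - c) * Fa N lam p c (1 + c))"

end

theory Submission
  imports Defs
begin

text \<open>At \<open>p = 0\<close> every summand of the \<open>c\<close>-sum in the recursion for \<open>F^(a)(i)\<close> carries the
  factor \<open>(1 - (1 - p)^a)^c = O(p^c)\<close>, so \<open>F^(a)(i)\<close> reduces to the tail sum
  \<open>\<Sum>j\<ge>i. 1/(\<lambda> j (N - j))\<close>, independently of \<open>a\<close>. To first order only the summand \<open>c = 1\<close>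
  survives, and a downward induction on \<open>i\<close> shows that the derivative of \<open>F^(a)(i)\<close> at \<open>p = 0\<close>
  is \<open>-a/(\<lambda> i) - (\<Sum>j>i. 1/(\<lambda> j))\<close>: the contributions \<open>\<plusminus>a (N - i) F\<^sub>0(i + 1)\<close> of the factor
  \<open>(1 - p)^(a (N - i))\<close> and of the summand \<open>c = 1\<close> cancel. Since \<open>F(1) = F^(1)(1)\<close>, its
  derivative at \<open>0\<close> is \<open>-H\<^sub>N\<^sub>-\<^sub>1/\<lambda>\<close>.\<close>

declare Fa.simps[simp del]

lemma Fa_base: "N - 1 \<le> i \<Longrightarrow> Fa N lam p a i = (1 - p) ^ a / (lam * real (N - 1))"
  by (subst Fa.simps) simp

lemma Fa_step: "i < N - 1 \<Longrightarrow> Fa N lam p a i =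
   (1 - p) ^ (a * (N - i)) * (1 / (lam * real i * real (N - i)) + Fa N lam p 1 (i + 1))
   + (\<Sum>c = 1..N - i - 1. real ((N - i) choose c) * (1 - (1 - p) ^ a) ^ c
        * (1 - p) ^ (a * (N - i - c)) * Fa N lam p c (i + c))"
  by (subst Fa.simps) simp

lemma F1_eq_Fa: "N \<ge> 3 \<Longrightarrow> F1 N lam p = Fa N lam p 1 1"
  by (simp add: Fa_step F1_def numeral_2_eq_2)

definition F0_tail :: "nat \<Rightarrow> real \<Rightarrow> nat \<Rightarrow> real" where
  "F0_tail N lam i = (\<Sum>j = i..N - 1. 1 / (lam * real j * real (N - j)))"

definition harm_tail :: "nat \<Rightarrow> nat \<Rightarrow> real" where
  "harm_tail N i = (\<Sum>j = i..N - 1. 1 / real j)"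

lemma F0_tail_split: "i \<le> N - 1 \<Longrightarrow> F0_tail N lam i = 1 / (lam * real i * real (N - i)) + F0_tail N lam (i + 1)"
  unfolding F0_tail_def by (simp add: sum.atLeast_Suc_atMost)

lemma harm_tail_split: "i \<le> N - 1 \<Longrightarrow> harm_tail N i = 1 / real i + harm_tail N (i + 1)"
  unfolding harm_tail_def by (simp add: sum.atLeast_Suc_atMost)

lemma harm_tail_1: "harm_tail N 1 = harm (N - 1)"
  by (simp add: harm_tail_def harm_def divide_inverse)

lemma Fa_at_0:
  assumes "1 \<le> i" "i \<le> N - 1"
  shows "Fa N lam 0 a i = F0_tail N lam i"
  using assms
proof (induction "N - 1 - i" arbitrary: i a rule: less_induct)
  case (less i a)
  show ?case
  proof (cases "i = N - 1")
    case True
    then show ?thesis using less.prems by (simp add: Fa_base F0_tail_def of_nat_diff)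
  next
    case False
    then have "i < N - 1" using less.prems by simp
    moreover have "Fa N lam 0 1 (i + 1) = F0_tail N lam (i + 1)"
      using less.hyps \<open>i < N - 1\<close> by simp
    moreover have "(\<Sum>c = 1..N - i - 1. real ((N - i) choose c) * (1 - (1 - 0) ^ a) ^ c
        * (1 - 0) ^ (a * (N - i - c)) * Fa N lam 0 c (i + c)) = 0"
      by (rule sum.neutral) auto
    ultimately show ?thesis
      by (simp add: Fa_step F0_tail_split)
  qed
qed

lemma DERIV_one_minus_power_at_0: "DERIV (\<lambda>p::real. (1 - p) ^ k) 0 :> - real k"
proof -
  have "DERIV (\<lambda>p::real. 1 - p) 0 :> -1"
    using DERIV_diff[OF DERIV_const DERIV_ident, of 1 0 UNIV] by simp
  from DERIV_power[OF this, of k] show ?thesis by simp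
qed

lemma DERIV_power_mult_at_0:
  fixes u v g :: "real \<Rightarrow> real"
  assumes "DERIV u 0 :> du" "u 0 = 0" "DERIV v 0 :> dv" "DERIV g 0 :> dg" "c \<ge> 1"
  shows "DERIV (\<lambda>p. u p ^ c * v p * g p) 0 :> (if c = 1 then du * v 0 * g 0 else 0)"
proof -
  have "DERIV (\<lambda>p. u p ^ c) 0 :> (if c = 1 then du else 0)"
    using DERIV_power[OF assms(1), of c] assms(2,5) by (cases "c = 1") (auto simp: power_0_left)
  from DERIV_mult[OF DERIV_mult[OF this assms(3)] assms(4)]
  have "DERIV (\<lambda>p. u p ^ c * v p * g p) 0 :> (if c = 1 then du else 0) * v 0 * g 0"
    using assms(2,5) by (simp add: zero_power)
  then show ?thesis by (cases "c = 1") simp_all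
qed

lemma DERIV_binomial_summand_at_0:
  fixes g :: "real \<Rightarrow> real"
  assumes "DERIV g 0 :> dg" "c \<ge> 1"
  shows "DERIV (\<lambda>p. C * (1 - (1 - p) ^ a) ^ c * (1 - p) ^ k * g p) 0
    :> (if c = 1 then C * real a * g 0 else 0)"
proof -
  have "DERIV (\<lambda>p::real. 1 - (1 - p) ^ a) 0 :> real a"
    using DERIV_diff[OF DERIV_const DERIV_one_minus_power_at_0, of 1 a] by simp
  then have "DERIV (\<lambda>p. (1 - (1 - p) ^ a) ^ c * (1 - p) ^ k * g p) 0
      :> (if c = 1 then real a * (1 - 0) ^ k * g 0 else 0)"
    using assms by (intro DERIV_power_mult_at_0[OF _ _ DERIV_one_minus_power_at_0]) auto
  from DERIV_cmult[OF this, of C] show ?thesis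
    by (cases "c = 1") (simp_all add: mult.assoc)
qed

lemma Fa_derivative_cancellation:
  assumes "lam > 0" "1 \<le> i" "i < N - 1"
  shows "- real (a * (N - i)) * (1 / (lam * real i * real (N - i)) + s)
          + (- 1 / (lam * real (i + 1)) - harm_tail N (i + 2) / lam)
          + real (N - i) * real a * s
        = - real a / (lam * real i) - harm_tail N (i + 1) / lam"
proof -
  have "harm_tail N (i + 1) / lam = 1 / (lam * real (i + 1)) + harm_tail N (i + 2) / lam"
    using harm_tail_split[of "i + 1" N] assms(3) by (simp add: add_divide_distrib)
  moreover have "real (a * (N - i)) * (1 / (lam * real i * real (N - i)) + s)
      = real a / (lam * real i) + real (N - i) * real a * s"
    using assms by (simp add: field_simps del: of_nat_diff)
  ultimately show ?thesis by simp
qed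

lemma DERIV_Fa_at_0:
  assumes "lam > 0" "1 \<le> i" "i \<le> N - 1"
  shows "DERIV (\<lambda>p. Fa N lam p a i) 0 :> - real a / (lam * real i) - harm_tail N (i + 1) / lam"
  using assms(2,3)
proof (induction "N - 1 - i" arbitrary: i a rule: less_induct)
  case (less i a)
  show ?case
  proof (cases "i = N - 1")
    case True
    then have "(\<lambda>p. Fa N lam p a i) = (\<lambda>p. (1 - p) ^ a / (lam * real (N - 1)))"
      by (intro ext Fa_base) simp
    moreover have "harm_tail N (i + 1) = 0"
      using True by (simp add: harm_tail_def)
    ultimately show ?thesis
      using DERIV_cdivide[OF DERIV_one_minus_power_at_0, of a "lam * real (N - 1)"] True by simp
  next
    case False
    then have lt: "i < N - 1" using less.prems by simp
    have IH: "DERIV (\<lambda>p. Fa N lam p b j) 0 :> - real b / (lam * real j) - harm_tail N (j + 1) / lam"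
      if "i < j" "j \<le> N - 1" for j b
      using less that by simp
    have F0_next: "Fa N lam 0 1 (i + 1) = F0_tail N lam (i + 1)"
      using lt by (simp add: Fa_at_0)
    have D_lead: "DERIV (\<lambda>p. (1 - p) ^ (a * (N - i)) * (1 / (lam * real i * real (N - i)) + Fa N lam p 1 (i + 1))) 0
       :> - real (a * (N - i)) * (1 / (lam * real i * real (N - i)) + F0_tail N lam (i + 1))
          + (- 1 / (lam * real (i + 1)) - harm_tail N (i + 2) / lam)"
      using DERIV_mult[OF DERIV_one_minus_power_at_0 DERIV_add[OF DERIV_const IH[of "i + 1" 1]],
          of "a * (N - i)" "1 / (lam * real i * real (N - i))"] lt F0_next
      by simp
    have D_summand: "DERIV (\<lambda>p. real ((N - i) choose c) * (1 - (1 - p) ^ a) ^ c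
           * (1 - p) ^ (a * (N - i - c)) * Fa N lam p c (i + c)) 0
        :> (if c = 1 then real (N - i) * real a * F0_tail N lam (i + 1) else 0)"
      if c: "c \<in> {1..N - i - 1}" for c
    proof -
      have "DERIV (\<lambda>p. Fa N lam p c (i + c)) 0 :> - real c / (lam * real (i + c)) - harm_tail N (i + c + 1) / lam"
        using c by (intro IH) auto
      from DERIV_binomial_summand_at_0[OF this, where C = "real ((N - i) choose c)" and a = a
          and k = "a * (N - i - c)" and c = c]
      show ?thesis
        using c less.prems by (cases "c = 1") (simp_all add: Fa_at_0)
    qed
    have D_sum: "DERIV (\<lambda>p. \<Sum>c = 1..N - i - 1. real ((N - i) choose c) * (1 - (1 - p) ^ a) ^ c
           * (1 - p) ^ (a * (N - i - c)) * Fa N lam p c (i + c)) 0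
        :> real (N - i) * real a * F0_tail N lam (i + 1)"
    proof -
      have collapse: "(\<Sum>c = 1..N - i - 1. if c = 1 then real (N - i) * real a * F0_tail N lam (i + 1) else 0)
          = real (N - i) * real a * F0_tail N lam (i + 1)"
        using lt by (simp add: sum.delta) arith
      have "DERIV (\<lambda>p. \<Sum>c = 1..N - i - 1. real ((N - i) choose c) * (1 - (1 - p) ^ a) ^ c
           * (1 - p) ^ (a * (N - i - c)) * Fa N lam p c (i + c)) 0
        :> (\<Sum>c = 1..N - i - 1. if c = 1 then real (N - i) * real a * F0_tail N lam (i + 1) else 0)"
        by (rule DERIV_sum) (rule D_summand)
      then show ?thesis unfolding collapse .
    qed
    have "DERIV (\<lambda>p. Fa N lam p a i) 0
       :> - real (a * (N - i)) * (1 / (lam * real i * real (N - i)) + F0_tail N lam (i + 1))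
          + (- 1 / (lam * real (i + 1)) - harm_tail N (i + 2) / lam)
          + real (N - i) * real a * F0_tail N lam (i + 1)"
      unfolding Fa_step[OF lt] by (rule DERIV_add[OF D_lead D_sum])
    moreover note Fa_derivative_cancellation[OF \<open>lam > 0\<close> less.prems(1) lt]
    ultimately show ?thesis by simp
  qed
qed

lemma has_field_derivative_imp_smallo:
  fixes f :: "real \<Rightarrow> real"
  assumes "(f has_field_derivative D) (at x within S)"
  shows "(\<lambda>y. f y - (f x + D * (y - x))) \<in> o[at x within S](\<lambda>y. y - x)"
proof (rule smalloI_tendsto)
  have "((\<lambda>y. (f y - f x) / (y - x) - D) \<longlongrightarrow> 0) (at x within S)"
    using assms by (simp add: has_field_derivative_iff LIM_zero)
  moreover have "\<forall>\<^sub>F y in at x within S. (f y - f x) / (y - x) - D = (f y - (f x + D * (y - x))) / (y - x)"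
    by (auto simp: eventually_at_filter field_simps)
  ultimately show "((\<lambda>y. (f y - (f x + D * (y - x))) / (y - x)) \<longlongrightarrow> 0) (at x within S)"
    by (rule Lim_transform_eventually)
  show "\<forall>\<^sub>F y in at x within S. y - x \<noteq> 0"
    by (simp add: eventually_at_filter)
qed

lemma sum_inverse_product_eq_harm:
  assumes "N \<ge> 2" "lam > 0"
  shows "(\<Sum>i = 1..N - 1. 1 / (lam * real i * real (N - i))) = 2 / (lam * real N) * harm (N - 1)"
proof -
  have partial_fractions: "1 / (lam * real i * real (N - i)) = (1 / real i + 1 / real (N - i)) / (lam * real N)"
    if "i \<in> {1..N - 1}" for i
    using that assms by (auto simp: field_simps of_nat_diff)
  have "(\<Sum>i = 1..N - 1. 1 / real i) = (\<Sum>i = 1..N - 1. 1 / real (N - 1 + 1 - i))"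
    by (rule sum.atLeastAtMost_rev)
  also have "\<dots> = (\<Sum>i = 1..N - 1. 1 / real (N - i))"
    using assms by (intro sum.cong) auto
  finally have reflect: "(\<Sum>i = 1..N - 1. 1 / real (N - i)) = (\<Sum>i = 1..N - 1. 1 / real i)" ..
  have "(\<Sum>i = 1..N - 1. 1 / (lam * real i * real (N - i)))
      = (\<Sum>i = 1..N - 1. 1 / real i + 1 / real (N - i)) / (lam * real N)"
    by (simp add: partial_fractions sum_divide_distrib)
  also have "\<dots> = 2 / (lam * real N) * harm (N - 1)"
    by (simp only: sum.distrib reflect) (simp add: harm_def divide_inverse)
  finally show ?thesis .
qed

theorem lemma1:
  fixes N :: nat and lam :: real
  assumes "N \<ge> 3" and "lam > 0"
  shows "F1 N lam 0 = (\<Sum>i = 1..N - 1. 1 / (lam * real i * real (N - i)))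
       \<and> (\<Sum>i = 1..N - 1. 1 / (lam * real i * real (N - i))) = 2 / (lam * real N) * harm (N - 1)
       \<and> (\<lambda>p. F1 N lam p - (F1 N lam 0 - harm (N - 1) / lam * p)) \<in> o[at_right 0](\<lambda>p. p)"
proof -
  have F1_at_0: "F1 N lam 0 = (\<Sum>i = 1..N - 1. 1 / (lam * real i * real (N - i)))"
    using assms by (simp add: F1_eq_Fa Fa_at_0 F0_tail_def)
  have D_F1: "DERIV (F1 N lam) 0 :> - (harm (N - 1) / lam)"
  proof -
    have "F1 N lam = (\<lambda>p. Fa N lam p 1 1)"
      using assms by (intro ext F1_eq_Fa)
    moreover have "DERIV (\<lambda>p. Fa N lam p 1 1) 0 :> - real 1 / (lam * real 1) - harm_tail N (1 + 1) / lam"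
      using assms by (intro DERIV_Fa_at_0) auto
    moreover have "harm (N - 1) = 1 + harm_tail N (1 + 1)"
      using harm_tail_1[of N] harm_tail_split[of 1 N] assms by simp
    then have "- real 1 / (lam * real 1) - harm_tail N (1 + 1) / lam = - (harm (N - 1) / lam)"
      using \<open>lam > 0\<close> by (simp add: field_simps)
    ultimately show ?thesis
      by (simp only:)
  qed
  from has_field_derivative_imp_smallo[OF has_field_derivative_at_within[OF D_F1]]
  have "(\<lambda>p. F1 N lam p - (F1 N lam 0 - harm (N - 1) / lam * p)) \<in> o[at_right 0](\<lambda>p. p)"
    by simp
  with F1_at_0 show ?thesis
    using sum_inverse_product_eq_harm assms by simp
qed

end
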